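(* Let $0<\delta\le 1/2$. Let $A\subset\mathbb{R}^d$ be a finite nonempty set and $C\subset\mathbb{R}^d$ a finite nonempty set of centers. For $a\in A$ let $D(a) = \min_{c\in C}\|a-c\|$, and let $\mathcal{D}: A\to\mathbb{R}_{\ge0}$ satisfy $(1-\delta)D(a)\le\mathcal D(a)\le(1+\delta)D(a)$ for all $a\in A$, with $\sum_{a\in A}\mathcal D(a)^2>0$. Let $c$ be a random point of $A$ chosen with $\Pr[c=a_0] = \mathcal D(a_0)^2/\sum_{a\in A}\mathcal D(a)^2$. Then $$\mathbb{E}\big[\mathrm{cost}(A, C\cup\{c\})\big] \le 72\cdot OPT(A).$$
   Context: For a finite set $A$ and center set $C'$, $\mathrm{cost}(A,C') = \sum_{a\in A}\min_{c'\in C'}\|a-c'\|^2$. $OPT(A) = \sum_{a\in A}\|a-\mu(A)\|^2$ where $\mu(A) = \frac1{|A|}\sum_{a\in A}a$ is the centroid (the optimal $1$-means cost of $A$). *)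

theory Defs
  imports "HOL-Analysis.Analysis"
begin

definition kcost :: "'a::euclidean_space set \<Rightarrow> 'a set \<Rightarrow> real" where
  "kcost A C' = (\<Sum>a\<in>A. Min ((\<lambda>c'. (norm (a - c'))\<^sup>2) ` C'))"

definition centroid :: "'a::euclidean_space set \<Rightarrow> 'a" where
  "centroid A = (1 / real (card A)) *\<^sub>R (\<Sum>a\<in>A. a)"

definition OPT :: "'a::euclidean_space set \<Rightarrow> real" where
  "OPT A = (\<Sum>a\<in>A. (norm (a - centroid A))\<^sup>2)"

definition distC :: "'a::euclidean_space set \<Rightarrow> 'a \<Rightarrow> real" where
  "distC C a = Min ((\<lambda>c. norm (a - c)) ` C)"

end

theory Submission
  imports Defs
begin

text \<open>
  Write \<open>T = \<Sum>a\<in>A. D(a)\<^sup>2\<close> for the exact \<open>D\<^sup>2\<close>-mass and \<open>n = |A|\<close>.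
  Averaging the triangle inequality \<open>D(a\<^sub>0) \<le> D(a) + \<parallel>a - a\<^sub>0\<parallel>\<close> over \<open>a \<in> A\<close>
  gives \<open>n D(a\<^sub>0)\<^sup>2 \<le> 2T + 2P(a\<^sub>0)\<close>, where \<open>P(a\<^sub>0) = \<Sum>a\<in>A. \<parallel>a - a\<^sub>0\<parallel>\<^sup>2\<close>.
  The new cost after adding \<open>a\<^sub>0\<close> is at most both \<open>T\<close> and \<open>P(a\<^sub>0)\<close>, so
  \<open>n D(a\<^sub>0)\<^sup>2 cost(A, C \<union> {a\<^sub>0}) \<le> 4 T P(a\<^sub>0)\<close>, and summing with
  \<open>\<Sum>a\<^sub>0\<in>A. P(a\<^sub>0) = 2n OPT(A)\<close> bounds the unnormalised expectation by \<open>8 T OPT(A)\<close>.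
  The approximate weights change \<open>D\<^sup>2\<close> by factors \<open>(1 \<pm> \<delta>)\<^sup>2\<close>, costing at most
  \<open>((1+\<delta>)/(1-\<delta>))\<^sup>2 \<le> 9\<close>, whence the constant \<open>72\<close>.
\<close>

lemma distC_attained:
  assumes "finite C" "C \<noteq> {}"
  obtains c where "c \<in> C" "distC C a = norm (a - c)"
proof -
  have "Min ((\<lambda>c. norm (a - c)) ` C) \<in> (\<lambda>c. norm (a - c)) ` C"
    using assms by (intro Min_in) auto
  then show ?thesis using that unfolding distC_def by auto
qed

lemma distC_le:
  assumes "finite C" "c \<in> C"
  shows "distC C a \<le> norm (a - c)"
  unfolding distC_def using assms by (intro Min_le) auto

lemma distC_nonneg:
  assumes "finite C" "C \<noteq> {}"
  shows "distC C a \<ge> 0"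
  using assms by (metis distC_attained norm_ge_zero)

lemma distC_le_distC_add_dist:
  assumes "finite C" "C \<noteq> {}"
  shows "distC C y \<le> distC C a + norm (a - y)"
proof -
  obtain c where c: "c \<in> C" "distC C a = norm (a - c)"
    using distC_attained[OF assms] .
  have "distC C y \<le> norm (y - c)" using distC_le[OF assms(1) c(1)] .
  also have "\<dots> \<le> norm (a - y) + norm (a - c)"
    using norm_triangle_ineq[of "y - a" "a - c"] by (simp add: norm_minus_commute)
  finally show ?thesis using c(2) by simp
qed

lemma distC_sq_le:
  assumes "finite C" "C \<noteq> {}"
  shows "(distC C y)\<^sup>2 \<le> 2 * (distC C a)\<^sup>2 + 2 * (norm (a - y))\<^sup>2"
proof -
  have "(distC C y)\<^sup>2 \<le> (distC C a + norm (a - y))\<^sup>2"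
    using distC_le_distC_add_dist[OF assms] distC_nonneg[OF assms] by (intro power_mono) auto
  also have "\<dots> \<le> 2 * (distC C a)\<^sup>2 + 2 * (norm (a - y))\<^sup>2"
    using sum_squares_bound[of "distC C a" "norm (a - y)"] by (simp add: power2_sum)
  finally show ?thesis .
qed

lemma kcost_nonneg:
  assumes "finite C'" "C' \<noteq> {}"
  shows "kcost A C' \<ge> 0"
  unfolding kcost_def using assms by (intro sum_nonneg) (simp add: Min_ge_iff)

lemma kcost_insert_le_sum_sq_dist:
  assumes "finite C"
  shows "kcost A (C \<union> {x}) \<le> (\<Sum>a\<in>A. (norm (a - x))\<^sup>2)"
  unfolding kcost_def using assms by (intro sum_mono Min_le) auto

lemma kcost_insert_le_sum_sq_distC:
  assumes "finite C" "C \<noteq> {}"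
  shows "kcost A (C \<union> {x}) \<le> (\<Sum>a\<in>A. (distC C a)\<^sup>2)"
  unfolding kcost_def
proof (intro sum_mono)
  fix a
  obtain c where c: "c \<in> C" "distC C a = norm (a - c)"
    using distC_attained[OF assms] .
  have "Min ((\<lambda>c'. (norm (a - c'))\<^sup>2) ` (C \<union> {x})) \<le> (norm (a - c))\<^sup>2"
    using assms(1) c(1) by (intro Min_le) auto
  then show "Min ((\<lambda>c'. (norm (a - c'))\<^sup>2) ` (C \<union> {x})) \<le> (distC C a)\<^sup>2"
    using c(2) by simp
qed

lemma sum_diff_centroid_eq_0:
  fixes A :: "'a::euclidean_space set"
  assumes "finite A" "A \<noteq> {}"
  shows "(\<Sum>a\<in>A. a - centroid A) = 0"
proof -
  have "real (card A) *\<^sub>R centroid A = (\<Sum>a\<in>A. a)"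
    using assms by (simp add: centroid_def card_gt_0_iff)
  then show ?thesis by (simp add: sum_subtractf sum_constant_scaleR)
qed

lemma norm_add_sq:
  fixes u v :: "'a::real_inner"
  shows "(norm (u + v))\<^sup>2 = (norm u)\<^sup>2 + 2 * (u \<bullet> v) + (norm v)\<^sup>2"
  by (simp add: power2_norm_eq_inner inner_add_left inner_add_right inner_commute)

lemma sum_sq_dist_eq_OPT_add:
  fixes A :: "'a::euclidean_space set"
  assumes "finite A" "A \<noteq> {}"
  shows "(\<Sum>a\<in>A. (norm (a - x))\<^sup>2) = OPT A + real (card A) * (norm (centroid A - x))\<^sup>2"
proof -
  define \<mu> where "\<mu> = centroid A"
  have "(norm (a - x))\<^sup>2 = (norm (a - \<mu>))\<^sup>2 + 2 * ((a - \<mu>) \<bullet> (\<mu> - x)) + (norm (\<mu> - x))\<^sup>2"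
    for a
    using norm_add_sq[of "a - \<mu>" "\<mu> - x"] by simp
  then have "(\<Sum>a\<in>A. (norm (a - x))\<^sup>2)
      = (\<Sum>a\<in>A. (norm (a - \<mu>))\<^sup>2 + 2 * ((a - \<mu>) \<bullet> (\<mu> - x)) + (norm (\<mu> - x))\<^sup>2)"
    by (rule sum.cong[OF refl])
  also have "\<dots> = OPT A + 2 * ((\<Sum>a\<in>A. a - \<mu>) \<bullet> (\<mu> - x))
      + real (card A) * (norm (\<mu> - x))\<^sup>2"
    by (simp add: OPT_def \<mu>_def sum.distrib sum_distrib_left inner_sum_left)
  finally show ?thesis
    using sum_diff_centroid_eq_0[OF assms] by (simp add: \<mu>_def)
qed

lemma sum_sum_sq_dist_eq:
  fixes A :: "'a::euclidean_space set"
  assumes "finite A" "A \<noteq> {}"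
  shows "(\<Sum>x\<in>A. \<Sum>a\<in>A. (norm (a - x))\<^sup>2) = 2 * real (card A) * OPT A"
proof -
  have "(\<Sum>x\<in>A. (norm (centroid A - x))\<^sup>2) = OPT A"
    unfolding OPT_def by (simp add: norm_minus_commute)
  then show ?thesis
    by (simp add: sum_sq_dist_eq_OPT_add[OF assms] sum.distrib sum_distrib_left[symmetric])
qed

lemma card_mult_sq_distC_le:
  fixes A C :: "'a::euclidean_space set"
  assumes "finite C" "C \<noteq> {}"
  shows "real (card A) * (distC C y)\<^sup>2
           \<le> 2 * (\<Sum>a\<in>A. (distC C a)\<^sup>2) + 2 * (\<Sum>a\<in>A. (norm (a - y))\<^sup>2)"
proof -
  have "(\<Sum>a\<in>A. (distC C y)\<^sup>2) \<le> (\<Sum>a\<in>A. 2 * (distC C a)\<^sup>2 + 2 * (norm (a - y))\<^sup>2)"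
    by (intro sum_mono distC_sq_le[OF assms])
  then show ?thesis by (simp add: sum.distrib sum_distrib_left)
qed

lemma card_mult_sq_distC_mult_kcost_le:
  fixes A C :: "'a::euclidean_space set" and y :: 'a
  assumes "finite C" "C \<noteq> {}"
  defines "T \<equiv> \<Sum>a\<in>A. (distC C a)\<^sup>2"
      and "P \<equiv> \<Sum>a\<in>A. (norm (a - y))\<^sup>2"
  shows "real (card A) * ((distC C y)\<^sup>2 * kcost A (C \<union> {y})) \<le> 4 * T * P"
proof -
  define K where "K = kcost A (C \<union> {y})"
  have K_nonneg: "0 \<le> K"
    unfolding K_def using assms(1) by (intro kcost_nonneg) auto
  have K_le: "K \<le> T" "K \<le> P"
    unfolding K_def T_def P_def
    by (rule kcost_insert_le_sum_sq_distC[OF assms(1,2)], rule kcost_insert_le_sum_sq_dist[OF assms(1)])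
  have TP_nonneg: "0 \<le> T" "0 \<le> P"
    unfolding T_def P_def by (simp_all add: sum_nonneg)
  have "real (card A) * (distC C y)\<^sup>2 * K \<le> (2 * T + 2 * P) * K"
    using card_mult_sq_distC_le[OF assms(1,2), of A y] K_nonneg
    unfolding T_def P_def by (rule mult_right_mono)
  also have "\<dots> = 2 * T * K + 2 * P * K"
    by (simp add: distrib_right)
  also have "\<dots> \<le> 2 * T * P + 2 * P * T"
    using K_le TP_nonneg by (intro add_mono mult_left_mono) simp_all
  finally show ?thesis
    unfolding K_def by (simp add: mult_ac)
qed

lemma sum_sq_distC_mult_kcost_le:
  fixes A C :: "'a::euclidean_space set"
  assumes "finite A" "A \<noteq> {}" "finite C" "C \<noteq> {}"
  shows "(\<Sum>y\<in>A. (distC C y)\<^sup>2 * kcost A (C \<union> {y}))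
           \<le> 8 * (\<Sum>a\<in>A. (distC C a)\<^sup>2) * OPT A"
proof -
  define n where "n = real (card A)"
  define T where "T = (\<Sum>a\<in>A. (distC C a)\<^sup>2)"
  have n_pos: "n > 0"
    unfolding n_def using assms(1,2) by (simp add: card_gt_0_iff)
  have "n * (\<Sum>y\<in>A. (distC C y)\<^sup>2 * kcost A (C \<union> {y}))
      = (\<Sum>y\<in>A. n * ((distC C y)\<^sup>2 * kcost A (C \<union> {y})))"
    by (rule sum_distrib_left)
  also have "\<dots> \<le> (\<Sum>y\<in>A. 4 * T * (\<Sum>a\<in>A. (norm (a - y))\<^sup>2))"
    unfolding n_def T_def by (intro sum_mono card_mult_sq_distC_mult_kcost_le[OF assms(3,4)])
  also have "\<dots> = 4 * T * (\<Sum>y\<in>A. \<Sum>a\<in>A. (norm (a - y))\<^sup>2)"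
    by (rule sum_distrib_left[symmetric])
  also have "\<dots> = n * (8 * T * OPT A)"
    unfolding sum_sum_sq_dist_eq[OF assms(1,2)] n_def by simp
  finally show ?thesis
    using n_pos unfolding T_def by simp
qed

lemma sq_bounds_of_relative_error:
  fixes d e \<delta> :: real
  assumes "0 \<le> d" "0 \<le> e" "\<delta> \<le> 1/2" "(1 - \<delta>) * d \<le> e" "e \<le> (1 + \<delta>) * d"
  shows "d\<^sup>2 \<le> 4 * e\<^sup>2" and "e\<^sup>2 \<le> 9/4 * d\<^sup>2"
proof -
  have lin: "d \<le> 2 * e" "e \<le> 3/2 * d"
    using assms mult_right_mono[OF _ assms(1), of "1/2" "1 - \<delta>"]
      mult_right_mono[OF _ assms(1), of "1 + \<delta>" "3/2"]
    by auto
  have "d\<^sup>2 \<le> (2 * e)\<^sup>2" "e\<^sup>2 \<le> (3/2 * d)\<^sup>2"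
    using power_mono[OF lin(1) assms(1)] power_mono[OF lin(2) assms(2)] .
  then show "d\<^sup>2 \<le> 4 * e\<^sup>2" "e\<^sup>2 \<le> 9/4 * d\<^sup>2"
    by (simp_all add: power_mult_distrib power_divide)
qed

theorem mainTheorem5:
  fixes A C :: "'a::euclidean_space set"
    and \<D> :: "'a \<Rightarrow> real"
    and \<delta> :: real
  assumes "0 < \<delta>" and "\<delta> \<le> 1/2"
    and "finite A" and "A \<noteq> {}"
    and "finite C" and "C \<noteq> {}"
    and "\<forall>a\<in>A. \<D> a \<ge> 0"
    and "\<forall>a\<in>A. (1 - \<delta>) * distC C a \<le> \<D> a \<and> \<D> a \<le> (1 + \<delta>) * distC C a"
    and "(\<Sum>a\<in>A. (\<D> a)\<^sup>2) > 0"
  shows "(\<Sum>a0\<in>A. ((\<D> a0)\<^sup>2 / (\<Sum>a\<in>A. (\<D> a)\<^sup>2)) * kcost A (C \<union> {a0}))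
           \<le> 72 * OPT A"
proof -
  define S where "S = (\<Sum>a\<in>A. (\<D> a)\<^sup>2)"
  define T where "T = (\<Sum>a\<in>A. (distC C a)\<^sup>2)"
  have sq_bounds: "(distC C a)\<^sup>2 \<le> 4 * (\<D> a)\<^sup>2" "(\<D> a)\<^sup>2 \<le> 9/4 * (distC C a)\<^sup>2"
    if "a \<in> A" for a
    using sq_bounds_of_relative_error[OF distC_nonneg[OF assms(5,6)]] assms(2,7,8) that by auto
  have T_le: "T \<le> 4 * S"
    unfolding T_def S_def sum_distrib_left by (intro sum_mono sq_bounds)
  have "(\<Sum>y\<in>A. (\<D> y)\<^sup>2 * kcost A (C \<union> {y}))
      \<le> (\<Sum>y\<in>A. 9/4 * (distC C y)\<^sup>2 * kcost A (C \<union> {y}))"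
    using assms(5) by (intro sum_mono mult_right_mono sq_bounds kcost_nonneg) auto
  also have "\<dots> = 9/4 * (\<Sum>y\<in>A. (distC C y)\<^sup>2 * kcost A (C \<union> {y}))"
    by (simp add: sum_distrib_left mult.assoc)
  also have "\<dots> \<le> 9/4 * (8 * T * OPT A)"
    using sum_sq_distC_mult_kcost_le[OF assms(3-6)] unfolding T_def by (rule mult_left_mono) simp
  also have "\<dots> \<le> 72 * OPT A * S"
    using T_le OPT_def[of A] mult_right_mono[OF T_le, of "OPT A"] by (simp add: sum_nonneg)
  finally show ?thesis
    using assms(9) by (simp add: S_def sum_divide_distrib[symmetric] pos_divide_le_eq)
qed

end
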